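(* In the discrete setting described in the context, assume (F2), and let $l_b>0$ be the mesh-independent constant for which $l_b\|\mathbf{p}-\tilde{\mathbf{p}}\|_{\mathbf{M}_p}^2\le\langle\mathbf{b}(\mathbf{p})-\mathbf{b}(\tilde{\mathbf{p}}),\mathbf{p}-\tilde{\mathbf{p}}\rangle$ for all $\mathbf{p},\tilde{\mathbf{p}}\in\mathbf{P}_{\phi\ge0}$ (the best such constant). Then for all $\mathbf{p},\tilde{\mathbf{p}}\in\mathbf{P}_{\phi\ge0}$, $$l_b\langle\mathbf{b}(\mathbf{p})-\mathbf{b}(\tilde{\mathbf{p}}),\mathbf{p}-\tilde{\mathbf{p}}\rangle\le\|\mathbf{b}(\mathbf{p})-\mathbf{b}(\tilde{\mathbf{p}})\|_{\mathbf{M}_p^{-1}}^2 .$$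
   Context: Let $\Omega\subset\mathbb{R}^d$, $d\in\{2,3\}$, be a bounded polyhedral domain with a regular triangulation $\mathcal{T}_h$. Let $W_h$ be the piecewise constant functions, $V_h$ the continuous piecewise (bi)linear vector fields vanishing on $\partial\Omega$, with fixed bases; $\mathbf{p}\in\mathbb{R}^{n_p}$ denotes pressure coefficient vectors. $\mathbf{M}_p$ is the diagonal mass matrix of $W_h$; $\langle\cdot,\cdot\rangle$ is the Euclidean product and $\|\mathbf{v}\|_{\mathbf{M}}^2=\langle\mathbf{M}\mathbf{v},\mathbf{v}\rangle$. $\mathbf{D}_{pu}$ has entries $\langle\nabla\cdot\mathbf{v}_j,w_k\rangle_{L^2}$, $\mathbf{A}_{uu}$ entries $2\mu\langle\varepsilon(\mathbf{v}_j),\varepsilon(\mathbf{v}_k)\rangle_{L^2}+\lambda\langle\nabla\cdot\mathbf{v}_j,\nabla\cdot\mathbf{v}_k\rangle_{L^2}$ ($\mu,\lambda>0$). A saturation law $s_w:\mathbb{R}\to[0,1]$ is given with $s_w(p)=1$ for $p\ge0$ and negative inverse $p_c:(0,1]\to\mathbb{R}_+$, $s_w(-p_c(s))=s$; $p_E(p)=s_w(p)p-\int_{s_w(p)}^1p_c(s)\,ds$. $\mathbf{S}_{pp}(\mathbf{p})=\mathrm{diag}(s_w(\mathbf{p}_k))_k$, $\mathbf{p}_E(\mathbf{p})_k=p_E(\mathbf{p}_k)$. With $\alpha>0$, $N\in(0,\infty]$, given $\boldsymbol{\phi}_0$, $\mathbf{f}_u$: $\boldsymbol{\phi}(\mathbf{p})=\boldsymbol{\phi}_0+\alpha\mathbf{D}_{pu}\mathbf{A}_{uu}^{-1}\mathbf{f}_u+\alpha^2\mathbf{D}_{pu}\mathbf{A}_{uu}^{-1}\mathbf{D}_{pu}^\top\mathbf{p}_E(\mathbf{p})+\tfrac1N\mathbf{M}_p\mathbf{p}_E(\mathbf{p})$,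 $\mathbf{b}(\mathbf{p})=\mathbf{S}_{pp}(\mathbf{p})\boldsymbol{\phi}(\mathbf{p})$, $\mathbf{P}_{\phi\ge0}=\{\mathbf{p}:\boldsymbol{\phi}(\mathbf{p})\in[0,1]\text{ componentwise}\}$. (F2): $s_w$ has a bounded derivative and $\inf_{\mathbf{p}\in\mathbf{P}_{\phi\ge0},\,i}s_w(\mathbf{p}_i)>0$. *)

theory Defs
  imports "HOL-Analysis.Analysis"
begin

text \<open>Diagonal matrix with diagonal given by a vector (used for the lumped
  mass matrix M_p of the piecewise constant space W_h).\<close>
definition diag_mat :: "real ^ 'n \<Rightarrow> real ^ 'n ^ 'n" where
  "diag_mat m = (\<chi> i j. if i = j then m $ i else 0)"

definition wnorm2 :: "real ^ 'n ^ 'n \<Rightarrow> real ^ 'n \<Rightarrow> real" where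
  "wnorm2 M v = (M *v v) \<bullet> v"

definition pE :: "(real \<Rightarrow> real) \<Rightarrow> (real \<Rightarrow> real) \<Rightarrow> real \<Rightarrow> real" where
  "pE sw pc p = sw p * p - integral {sw p..1} pc"

definition pE_vec :: "(real \<Rightarrow> real) \<Rightarrow> (real \<Rightarrow> real) \<Rightarrow> real ^ 'p \<Rightarrow> real ^ 'p" where
  "pE_vec sw pc p = (\<chi> k. pE sw pc (p $ k))"

text \<open>Porosity
  phi(p) = phi_0 + alpha D A^{-1} f_u + alpha^2 D A^{-1} D^T p_E(p) + (1/N) M_p p_E(p);
  N ranges over (0, \<infinity>] (extended reals), with 1/\<infinity> = 0.\<close>
definition phi ::
  "(real \<Rightarrow> real) \<Rightarrow> (real \<Rightarrow> real) \<Rightarrow> real \<Rightarrow> ereal \<Rightarrow> real ^ 'p \<Rightarrow> real ^ 'u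
   \<Rightarrow> real ^ 'u ^ 'p \<Rightarrow> real ^ 'u ^ 'u \<Rightarrow> real ^ 'p ^ 'p \<Rightarrow> real ^ 'p \<Rightarrow> real ^ 'p" where
  "phi sw pc \<alpha> N phi0 fu D A M p =
     phi0 + \<alpha> *\<^sub>R (D *v (matrix_inv A *v fu))
     + \<alpha>\<^sup>2 *\<^sub>R (D *v (matrix_inv A *v (transpose D *v pE_vec sw pc p)))
     + real_of_ereal (inverse N) *\<^sub>R (M *v pE_vec sw pc p)"

definition bvec ::
  "(real \<Rightarrow> real) \<Rightarrow> (real \<Rightarrow> real) \<Rightarrow> real \<Rightarrow> ereal \<Rightarrow> real ^ 'p \<Rightarrow> real ^ 'u
   \<Rightarrow> real ^ 'u ^ 'p \<Rightarrow> real ^ 'u ^ 'u \<Rightarrow> real ^ 'p ^ 'p \<Rightarrow> real ^ 'p \<Rightarrow> real ^ 'p" where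
  "bvec sw pc \<alpha> N phi0 fu D A M p =
     diag_mat (\<chi> k. sw (p $ k)) *v phi sw pc \<alpha> N phi0 fu D A M p"

definition Pphi ::
  "(real \<Rightarrow> real) \<Rightarrow> (real \<Rightarrow> real) \<Rightarrow> real \<Rightarrow> ereal \<Rightarrow> real ^ 'p \<Rightarrow> real ^ 'u
   \<Rightarrow> real ^ 'u ^ 'p \<Rightarrow> real ^ 'u ^ 'u \<Rightarrow> real ^ 'p ^ 'p \<Rightarrow> (real ^ 'p) set" where
  "Pphi sw pc \<alpha> N phi0 fu D A M =
     {p. \<forall>k. 0 \<le> phi sw pc \<alpha> N phi0 fu D A M p $ k \<and> phi sw pc \<alpha> N phi0 fu D A M p $ k \<le> 1}"

end

theory Submission
  imports Defs
begin

text \<open>Only the strong monotonicity of \<open>b\<close> and the shape of \<open>M\<^sub>p\<close> matter: for a diagonal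
  \<open>M\<close> with positive entries, \<open>l\<^sub>b \<parallel>x\<parallel>\<^sub>M\<^sup>2 \<le> \<langle>y, x\<rangle>\<close> implies \<open>l\<^sub>b \<langle>y, x\<rangle> \<le> \<parallel>y\<parallel>\<^sub>M\<^sub>\<inverse>\<^sup>2\<close>,
  since expanding \<open>0 \<le> \<parallel>y - l\<^sub>b M x\<parallel>\<^sub>M\<^sub>\<inverse>\<^sup>2\<close> gives
  \<open>\<parallel>y\<parallel>\<^sub>M\<^sub>\<inverse>\<^sup>2 \<ge> 2 l\<^sub>b \<langle>y, x\<rangle> - l\<^sub>b\<^sup>2 \<parallel>x\<parallel>\<^sub>M\<^sup>2 \<ge> l\<^sub>b \<langle>y, x\<rangle>\<close>.\<close>

lemma matrix_inv_unique:
  fixes M N :: "'a::semiring_1 ^ 'n ^ 'n"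
  assumes "M ** N = mat 1" and "N ** M = mat 1"
  shows "matrix_inv M = N"
proof -
  have inv: "M ** matrix_inv M = mat 1 \<and> matrix_inv M ** M = mat 1"
    unfolding matrix_inv_def by (rule someI_ex) (use assms in blast)
  have "matrix_inv M = matrix_inv M ** (M ** N)"
    using assms(1) by simp
  also have "\<dots> = (matrix_inv M ** M) ** N"
    by (simp add: matrix_mul_assoc)
  finally show ?thesis
    using inv by simp
qed

lemma sum_if_eq_mult:
  "(\<Sum>j\<in>(UNIV::'n::finite set). (if i = j then (a j::real) else 0) * f j) = a i * f i"
  by (simp add: if_distrib[of "\<lambda>t. t * _"] sum.delta cong: if_cong)

lemma diag_mat_mult_diag_mat:
  "diag_mat (a::real ^ 'n) ** diag_mat b = diag_mat (\<chi> i. a $ i * b $ i)"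
  unfolding diag_mat_def matrix_matrix_mult_def by (simp add: vec_eq_iff sum_if_eq_mult)

lemma diag_mat_mult_vec: "diag_mat (a::real ^ 'n) *v x = (\<chi> i. a $ i * x $ i)"
  unfolding diag_mat_def matrix_vector_mult_def by (simp add: vec_eq_iff sum_if_eq_mult)

lemma matrix_inv_diag_mat:
  assumes "\<forall>k. (m::real ^ 'n) $ k \<noteq> 0"
  shows "matrix_inv (diag_mat m) = diag_mat (\<chi> k. inverse (m $ k))"
  using assms
  by (intro matrix_inv_unique; simp only: diag_mat_mult_diag_mat)
     (simp_all add: diag_mat_def mat_def vec_eq_iff)

lemma wnorm2_diag_mat: "wnorm2 (diag_mat m) x = (\<Sum>i\<in>UNIV. m $ i * (x $ i)\<^sup>2)"
  unfolding wnorm2_def diag_mat_mult_vec inner_vec_def by (simp add: power2_eq_square mult.assoc)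

lemma wnorm2_inverse_diag_mat:
  assumes "\<forall>k. (m::real ^ 'n) $ k > 0"
  shows "wnorm2 (matrix_inv (diag_mat m)) y = (\<Sum>i\<in>UNIV. (y $ i)\<^sup>2 / m $ i)"
proof -
  have "\<forall>k. m $ k \<noteq> 0" using assms by (metis less_irrefl)
  then show ?thesis
    unfolding matrix_inv_diag_mat[OF \<open>\<forall>k. m $ k \<noteq> 0\<close>] wnorm2_def diag_mat_mult_vec inner_vec_def
    by (simp add: divide_inverse power2_eq_square mult.commute mult.left_commute)
qed

lemma strong_monotone_imp_cocoercive:
  fixes m x y :: "real ^ 'n" and l :: real
  assumes m_pos: "\<forall>k. m $ k > 0" and "l \<ge> 0"
    and strong: "l * wnorm2 (diag_mat m) x \<le> y \<bullet> x"
  shows "l * (y \<bullet> x) \<le> wnorm2 (matrix_inv (diag_mat m)) y"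
proof -
  define X where "X = (\<Sum>i\<in>UNIV. m $ i * (x $ i)\<^sup>2)"
  define Y where "Y = (\<Sum>i\<in>UNIV. (y $ i)\<^sup>2 / m $ i)"
  define S where "S = (\<Sum>i\<in>UNIV. y $ i * x $ i)"
  have S: "y \<bullet> x = S" unfolding S_def inner_vec_def by simp
  have "0 \<le> (\<Sum>i\<in>UNIV. (y $ i - l * m $ i * x $ i)\<^sup>2 / m $ i)"
    using m_pos by (intro sum_nonneg divide_nonneg_nonneg) (auto intro: less_imp_le)
  also have "\<dots> = (\<Sum>i\<in>UNIV. (y $ i)\<^sup>2 / m $ i - 2 * l * (y $ i * x $ i) + l\<^sup>2 * (m $ i * (x $ i)\<^sup>2))"
  proof (rule sum.cong)
    fix i :: 'n
    have "m $ i \<noteq> 0" using m_pos by (metis less_irrefl)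
    then show "(y $ i - l * m $ i * x $ i)\<^sup>2 / m $ i
        = (y $ i)\<^sup>2 / m $ i - 2 * l * (y $ i * x $ i) + l\<^sup>2 * (m $ i * (x $ i)\<^sup>2)"
      by (simp add: field_simps power2_eq_square)
  qed simp
  also have "\<dots> = Y - 2 * l * S + l\<^sup>2 * X"
    unfolding X_def Y_def S_def by (simp add: sum.distrib sum_subtractf sum_distrib_left)
  finally have "0 \<le> Y - 2 * l * S + l\<^sup>2 * X" .
  moreover have "l * (l * X) \<le> l * S"
    using strong \<open>l \<ge> 0\<close> S by (simp add: X_def wnorm2_diag_mat mult_left_mono)
  ultimately have "l * S \<le> Y" by (simp add: power2_eq_square algebra_simps)
  then show ?thesis using S by (simp add: Y_def wnorm2_inverse_diag_mat[OF m_pos])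
qed

theorem corollary3:
  fixes sw pc :: "real \<Rightarrow> real"
    and \<alpha> :: real and N :: ereal
    and phi0 :: "real ^ 'p" and fu :: "real ^ 'u"
    and D :: "real ^ 'u ^ 'p" and A :: "real ^ 'u ^ 'u"
    and m :: "real ^ 'p" and lb :: real
  defines "M \<equiv> diag_mat m"
  defines "b \<equiv> bvec sw pc \<alpha> N phi0 fu D A M"
  defines "P \<equiv> Pphi sw pc \<alpha> N phi0 fu D A M"
  assumes alpha_pos: "\<alpha> > 0" and N_pos: "N > 0"
    \<comment> \<open>lumped mass matrix of W_h: diagonal with positive entries\<close>
    and m_pos: "\<forall>k. m $ k > 0"
    \<comment> \<open>stiffness matrix A_uu: symmetric positive definite\<close>
    and A_sym: "transpose A = A"
    and A_pd: "\<forall>v. v \<noteq> 0 \<longrightarrow> (A *v v) \<bullet> v > 0"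
    \<comment> \<open>saturation law\<close>
    and sw_range: "\<forall>x. 0 \<le> sw x \<and> sw x \<le> 1"
    and sw_one: "\<forall>x. x \<ge> 0 \<longrightarrow> sw x = 1"
    and pc_pos: "\<forall>s. 0 < s \<and> s \<le> 1 \<longrightarrow> pc s \<ge> 0"
    and pc_inv: "\<forall>s. 0 < s \<and> s \<le> 1 \<longrightarrow> sw (- pc s) = s"
    \<comment> \<open>(F2)\<close>
    and F2_deriv: "\<exists>B. \<forall>x. \<exists>d. (sw has_real_derivative d) (at x) \<and> \<bar>d\<bar> \<le> B"
    and F2_inf: "\<exists>c>0. \<forall>p\<in>P. \<forall>k. c \<le> sw (p $ k)"
    \<comment> \<open>l_b > 0 is the best constant of strong monotonicity of b on P\<close>
    and lb_pos: "lb > 0"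
    and lb_mono: "\<forall>p\<in>P. \<forall>q\<in>P. lb * wnorm2 M (p - q) \<le> (b p - b q) \<bullet> (p - q)"
    and lb_best: "\<forall>c. (\<forall>p\<in>P. \<forall>q\<in>P. c * wnorm2 M (p - q) \<le> (b p - b q) \<bullet> (p - q)) \<longrightarrow> c \<le> lb"
  shows "\<forall>p\<in>P. \<forall>q\<in>P.
           lb * ((b p - b q) \<bullet> (p - q)) \<le> wnorm2 (matrix_inv M) (b p - b q)"
proof (intro ballI)
  fix p q assume "p \<in> P" "q \<in> P"
  then have "lb * wnorm2 (diag_mat m) (p - q) \<le> (b p - b q) \<bullet> (p - q)"
    using lb_mono unfolding M_def by blast
  then show "lb * ((b p - b q) \<bullet> (p - q)) \<le> wnorm2 (matrix_inv M) (b p - b q)"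
    unfolding M_def using strong_monotone_imp_cocoercive m_pos lb_pos by (metis less_imp_le)
qed

end
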